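(* For all constraint sets $C,\tilde C$ and substitutions $\sigma$: if $C\to^{*\,\sigma}\tilde C$ and $\tilde C$ is in normal form, then there exists a unique substitution $\sigma_c$ with $\sigma_c\vdash_{\min} C$.
   Context: There are two binding times $\mathsf{S}$, $\mathsf{D}$; $\mathcal{L}$ is a finite set of labels disjoint from them. A binding-time expression is a binding time or a label; a constraint is a formal pair $B_1\preceq B_2$; a constraint set is a finite set of constraints, with $\mathrm{labels}(C)=\{l\in\mathcal{L}:\exists B.\ l\preceq B\in C\text{ or }B\preceq l\in C\}$. $C$ is in normal form if every $c\in C$ has one of the forms $\mathsf{S}\preceq l$, $l\preceq\mathsf{D}$, $l\preceq\tilde l$ with $l,\tilde l\in\mathcal{L}$. Satisfaction $\vdash b_1\preceq b_2$ holds exactly for $\mathsf{S}\preceq\mathsf{D}$, $\mathsf{S}\preceq\mathsf{S}$, $\mathsf{D}\preceq\mathsf{D}$. A substitution is a finite partial map $\sigma:\mathcal{L}\rightharpoonup\{\mathsf{S},\mathsf{D}\}$, extended to binding-time expressions as the identity on binding times and on labels outside its domain; $\sigma(C)=\{\sigma(B_1)\preceq\sigma(B_2): B_1\preceq B_2\in C\}$. The extension $\sigma\oplus\hat\sigma$ has domain $\mathrm{dom}(\sigma)\cup\mathrm{dom}(\hat\sigma)$ and maps $l$ to $\sigma(l)$ if $l\in\mathrm{dom}(\sigma)$, else to $\hat\sigma(l)$. $\sigma\vdash C$ means: for every $B_1\preceq B_2\in C$, $\sigma(B_1),\sigma(B_2)$ are binding times and $\vdash\sigma(B_1)\preceq\sigma(B_2)$.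 $\sigma_c\vdash_{\min}C$ means: $\sigma_c\vdash C$, $\mathrm{dom}(\sigma_c)=\mathrm{labels}(C)$, and for every $\sigma\vdash C$ and $l\in\mathrm{labels}(C)$, $\vdash\sigma_c(l)\preceq\sigma(l)$. Write $[\,]$ for the empty substitution and $[l\mapsto b]$ for the substitution with domain $\{l\}$. The normalization relation $C\to^{\sigma}\tilde C$ holds if $C=C_0\uplus\{c\}$ and one of: (a) $c=\mathsf{S}\preceq\mathsf{S}$, $\sigma=[\,]$, $\tilde C=C_0$; (b) $c=\mathsf{S}\preceq\mathsf{D}$, $\sigma=[\,]$, $\tilde C=C_0$; (c) $c=\mathsf{D}\preceq\mathsf{D}$, $\sigma=[\,]$, $\tilde C=C_0$; (d) $c=l\preceq\mathsf{S}$ with $l\in\mathcal{L}$, $\sigma=[l\mapsto\mathsf{S}]$, $\tilde C=[l\mapsto\mathsf{S}](C_0)$; (e) $c=\mathsf{D}\preceq l$ with $l\in\mathcal{L}$, $\sigma=[l\mapsto\mathsf{D}]$, $\tilde C=[l\mapsto\mathsf{D}](C_0)$. Exhaustive application $C\to^{*\,\sigma}\tilde C$ means there exist $k\ge 0$ and $C=\tilde C_0\to^{\sigma_1}\tilde C_1\to^{\sigma_2}\cdots\to^{\sigma_k}\tilde C_k=\tilde C$ with $\sigma=\sigma_1\oplus\cdots\oplus\sigma_k$, and no normalization step applies to $\tilde C$. *)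

theory Defs
  imports Main
begin

datatype bt = S | D

datatype 'l bte = BT bt | Lab 'l

type_synonym 'l constr = "'l bte \<times> 'l bte"
type_synonym 'l subst = "'l \<rightharpoonup> bt"

fun leq_bt :: "bt \<Rightarrow> bt \<Rightarrow> bool" where
  "leq_bt S D = True"
| "leq_bt S S = True"
| "leq_bt D D = True"
| "leq_bt D S = False"

definition labels :: "'l constr set \<Rightarrow> 'l set" where
  "labels C = {l. \<exists>B. (Lab l, B) \<in> C \<or> (B, Lab l) \<in> C}"

definition normal_form :: "'l constr set \<Rightarrow> bool" where
  "normal_form C \<longleftrightarrow> (\<forall>c\<in>C. (\<exists>l. c = (BT S, Lab l)) \<or> (\<exists>l. c = (Lab l, BT D))
       \<or> (\<exists>l l'. c = (Lab l, Lab l')))"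

fun app_subst :: "'l subst \<Rightarrow> 'l bte \<Rightarrow> 'l bte" where
  "app_subst \<sigma> (BT b) = BT b"
| "app_subst \<sigma> (Lab l) = (case \<sigma> l of Some b \<Rightarrow> BT b | None \<Rightarrow> Lab l)"

definition subst_cs :: "'l subst \<Rightarrow> 'l constr set \<Rightarrow> 'l constr set" where
  "subst_cs \<sigma> C = (\<lambda>(B1, B2). (app_subst \<sigma> B1, app_subst \<sigma> B2)) ` C"

text \<open>Extension sigma (+) sigma': sigma takes precedence.\<close>
definition ext_subst :: "'l subst \<Rightarrow> 'l subst \<Rightarrow> 'l subst" where
  "ext_subst \<sigma> \<sigma>' = \<sigma>' ++ \<sigma>"

definition sat :: "'l subst \<Rightarrow> 'l constr set \<Rightarrow> bool" where
  "sat \<sigma> C \<longleftrightarrow> (\<forall>(B1, B2)\<in>C. \<exists>b1 b2. app_subst \<sigma> B1 = BT b1 \<and> app_subst \<sigma> B2 = BT b2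
        \<and> leq_bt b1 b2)"

definition min_sol :: "'l subst \<Rightarrow> 'l constr set \<Rightarrow> bool" where
  "min_sol \<sigma>c C \<longleftrightarrow> sat \<sigma>c C \<and> dom \<sigma>c = labels C \<and>
     (\<forall>\<sigma>. sat \<sigma> C \<longrightarrow> (\<forall>l\<in>labels C. \<exists>b1 b2. \<sigma>c l = Some b1 \<and> \<sigma> l = Some b2 \<and> leq_bt b1 b2))"

text \<open>One normalization step C ->^sigma C'. C = C0 disjoint-union {c} means C0 = C - {c}.\<close>
inductive norm_step :: "'l constr set \<Rightarrow> 'l subst \<Rightarrow> 'l constr set \<Rightarrow> bool" where
  a: "(BT S, BT S) \<in> C \<Longrightarrow> norm_step C Map.empty (C - {(BT S, BT S)})"
| b: "(BT S, BT D) \<in> C \<Longrightarrow> norm_step C Map.empty (C - {(BT S, BT D)})"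
| c: "(BT D, BT D) \<in> C \<Longrightarrow> norm_step C Map.empty (C - {(BT D, BT D)})"
| d: "(Lab l, BT S) \<in> C \<Longrightarrow>
      norm_step C [l \<mapsto> S] (subst_cs [l \<mapsto> S] (C - {(Lab l, BT S)}))"
| e: "(BT D, Lab l) \<in> C \<Longrightarrow>
      norm_step C [l \<mapsto> D] (subst_cs [l \<mapsto> D] (C - {(BT D, Lab l)}))"

inductive norm_steps :: "'l constr set \<Rightarrow> 'l subst \<Rightarrow> 'l constr set \<Rightarrow> bool" where
  refl: "norm_steps C Map.empty C"
| step: "norm_steps C \<sigma> C' \<Longrightarrow> norm_step C' \<sigma>' C'' \<Longrightarrow> norm_steps C (ext_subst \<sigma> \<sigma>') C''"

definition norm_exh :: "'l constr set \<Rightarrow> 'l subst \<Rightarrow> 'l constr set \<Rightarrow> bool" where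
  "norm_exh C \<sigma> C' \<longleftrightarrow> norm_steps C \<sigma> C' \<and> \<not> (\<exists>\<sigma>' C''. norm_step C' \<sigma>' C'')"

end

theory Submission
  imports Defs
begin

text \<open>A normalization step only instantiates a label by the value that its removed constraint
  forces, so a solution of the result, extended by that instantiation, solves the input; a set in
  normal form is solved by mapping every label to D. Hence C is satisfiable. A satisfiable set
  has a least solution: a label is D iff every solution makes it D. This is a solution because
  b1 \<preceq> b2 just says that b1 = D implies b2 = D, and it is unique because \<preceq> is
  antisymmetric.\<close>

lemma leq_bt_iff: "leq_bt b1 b2 \<longleftrightarrow> (b1 = D \<longrightarrow> b2 = D)"
  by (cases b1; cases b2) simp_all

lemma leq_bt_antisym: "leq_bt b1 b2 \<Longrightarrow> leq_bt b2 b1 \<Longrightarrow> b1 = b2"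
  by (cases b1; cases b2) simp_all

definition satisfiable :: "'l constr set \<Rightarrow> bool" where
  "satisfiable C \<longleftrightarrow> (\<exists>\<tau>. sat \<tau> C)"

lemma sat_memD:
  "sat \<tau> C \<Longrightarrow> (B1, B2) \<in> C \<Longrightarrow>
    \<exists>b1 b2. app_subst \<tau> B1 = BT b1 \<and> app_subst \<tau> B2 = BT b2 \<and> leq_bt b1 b2"
  unfolding sat_def by blast

lemma sat_insert: "sat \<tau> (insert c C) \<longleftrightarrow> sat \<tau> {c} \<and> sat \<tau> C"
  unfolding sat_def by blast

lemma app_subst_app_subst_upd:
  "app_subst \<tau> (app_subst [l \<mapsto> b] B) = app_subst (\<tau>(l \<mapsto> b)) B"
  by (cases B) auto

lemma sat_subst_cs_upd: "sat \<tau> (subst_cs [l \<mapsto> b] C) \<longleftrightarrow> sat (\<tau>(l \<mapsto> b)) C"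
  unfolding sat_def subst_cs_def by (auto simp: app_subst_app_subst_upd)

lemma sat_if_sat_remove:
  assumes "c \<in> C" and "sat \<tau> {c}" and "sat \<tau> (C - {c})"
  shows "sat \<tau> C"
  using assms sat_insert[of \<tau> c "C - {c}"] by (simp add: insert_absorb)

lemma sat_BT_BT_iff: "sat \<tau> {(BT b1, BT b2)} \<longleftrightarrow> leq_bt b1 b2"
  unfolding sat_def by simp

lemma norm_step_reflects_sat:
  assumes "norm_step C \<sigma> C'" and "sat \<tau> C'"
  shows "\<exists>\<tau>'. sat \<tau>' C"
  using assms
proof (induction rule: norm_step.induct)
  case (a C)
  then show ?case using sat_if_sat_remove sat_BT_BT_iff by (metis leq_bt.simps(2))
next
  case (b C)
  then show ?case using sat_if_sat_remove sat_BT_BT_iff by (metis leq_bt.simps(1))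
next
  case (c C)
  then show ?case using sat_if_sat_remove sat_BT_BT_iff by (metis leq_bt.simps(3))
next
  case (d l C)
  have "sat (\<tau>(l \<mapsto> S)) {(Lab l, BT S)}" unfolding sat_def by simp
  moreover have "sat (\<tau>(l \<mapsto> S)) (C - {(Lab l, BT S)})"
    using d.prems by (simp add: sat_subst_cs_upd)
  ultimately show ?case using sat_if_sat_remove[OF d.hyps] by blast
next
  case (e l C)
  have "sat (\<tau>(l \<mapsto> D)) {(BT D, Lab l)}" unfolding sat_def by simp
  moreover have "sat (\<tau>(l \<mapsto> D)) (C - {(BT D, Lab l)})"
    using e.prems by (simp add: sat_subst_cs_upd)
  ultimately show ?case using sat_if_sat_remove[OF e.hyps] by blast
qed

lemma norm_steps_reflect_satisfiable:
  "norm_steps C \<sigma> C' \<Longrightarrow> satisfiable C' \<Longrightarrow> satisfiable C"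
  unfolding satisfiable_def
  by (induction rule: norm_steps.induct) (blast dest: norm_step_reflects_sat)+

lemma normal_form_satisfiable: "normal_form C \<Longrightarrow> satisfiable C"
  unfolding satisfiable_def normal_form_def sat_def
  by (rule exI[of _ "\<lambda>_. Some D"]) fastforce

lemma sat_labels_in_dom:
  assumes "sat \<tau> C" and "l \<in> labels C"
  shows "\<tau> l \<noteq> None"
proof
  assume "\<tau> l = None"
  then have "app_subst \<tau> (Lab l) = Lab l" by simp
  with assms show False unfolding labels_def by (fastforce dest: sat_memD)
qed

definition forced_D :: "'l constr set \<Rightarrow> 'l bte \<Rightarrow> bool" where
  "forced_D C B \<longleftrightarrow> (\<forall>\<tau>. sat \<tau> C \<longrightarrow> app_subst \<tau> B = BT D)"

definition least_sol :: "'l constr set \<Rightarrow> 'l subst" where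
  "least_sol C l = (if l \<in> labels C then Some (if forced_D C (Lab l) then D else S) else None)"

lemma forced_D_constr:
  assumes "(B1, B2) \<in> C" and "forced_D C B1"
  shows "forced_D C B2"
  unfolding forced_D_def
proof (intro allI impI)
  fix \<tau> assume "sat \<tau> C"
  moreover have "app_subst \<tau> B1 = BT D"
    using assms(2) \<open>sat \<tau> C\<close> unfolding forced_D_def by blast
  ultimately show "app_subst \<tau> B2 = BT D"
    using sat_memD[OF \<open>sat \<tau> C\<close> assms(1)] by (auto simp: leq_bt_iff)
qed

lemma app_subst_least_sol:
  assumes "satisfiable C" and "(B, B') \<in> C \<or> (B', B) \<in> C"
  shows "app_subst (least_sol C) B = BT (if forced_D C B then D else S)"
proof (cases B)
  case (BT b)
  from assms(1) obtain \<tau> where "sat \<tau> C" unfolding satisfiable_def by blast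
  then have "forced_D C (BT b) \<longleftrightarrow> b = D" unfolding forced_D_def by auto
  with BT show ?thesis by (cases b) auto
next
  case (Lab l)
  with assms(2) have "l \<in> labels C" unfolding labels_def by blast
  with Lab show ?thesis by (simp add: least_sol_def)
qed

lemma sat_least_sol:
  assumes "satisfiable C"
  shows "sat (least_sol C) C"
  unfolding sat_def
proof (intro ballI, clarify)
  fix B1 B2 assume c: "(B1, B2) \<in> C"
  have "app_subst (least_sol C) B1 = BT (if forced_D C B1 then D else S)"
    and "app_subst (least_sol C) B2 = BT (if forced_D C B2 then D else S)"
    using app_subst_least_sol[OF assms] c by blast+
  moreover have "leq_bt (if forced_D C B1 then D else S) (if forced_D C B2 then D else S)"
    using forced_D_constr[OF c] by (simp add: leq_bt_iff)
  ultimately show "\<exists>b1 b2. app_subst (least_sol C) B1 = BT b1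
      \<and> app_subst (least_sol C) B2 = BT b2 \<and> leq_bt b1 b2"
    by blast
qed

lemma dom_least_sol: "dom (least_sol C) = labels C"
  by (auto simp: least_sol_def split: if_splits)

lemma least_sol_le_sat:
  assumes \<tau>: "sat \<tau> C" and l: "l \<in> labels C"
  shows "\<exists>b1 b2. least_sol C l = Some b1 \<and> \<tau> l = Some b2 \<and> leq_bt b1 b2"
proof -
  obtain b where b: "\<tau> l = Some b" using sat_labels_in_dom[OF \<tau> l] by blast
  have "b = D" if "forced_D C (Lab l)"
  proof -
    have "app_subst \<tau> (Lab l) = BT D" using that \<tau> unfolding forced_D_def by blast
    with b show ?thesis by simp
  qed
  then have "leq_bt (if forced_D C (Lab l) then D else S) b" by (simp add: leq_bt_iff)
  with l b show ?thesis by (simp add: least_sol_def)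
qed

lemma min_sol_least_sol:
  assumes "satisfiable C"
  shows "min_sol (least_sol C) C"
  unfolding min_sol_def
proof (intro conjI allI impI ballI)
  show "sat (least_sol C) C" using assms by (rule sat_least_sol)
  show "dom (least_sol C) = labels C" by (rule dom_least_sol)
next
  fix \<tau> l assume "sat \<tau> C" and "l \<in> labels C"
  then show "\<exists>b1 b2. least_sol C l = Some b1 \<and> \<tau> l = Some b2 \<and> leq_bt b1 b2"
    by (rule least_sol_le_sat)
qed

lemma min_sol_unique:
  assumes \<sigma>: "min_sol \<sigma> C" and \<sigma>': "min_sol \<sigma>' C"
  shows "\<sigma> = \<sigma>'"
proof
  fix l
  show "\<sigma> l = \<sigma>' l"
  proof (cases "l \<in> labels C")
    case True
    have "sat \<sigma> C" "sat \<sigma>' C" using \<sigma> \<sigma>' unfolding min_sol_def by blast+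
    then obtain b b' where b: "\<sigma> l = Some b" "\<sigma>' l = Some b'" "leq_bt b b'"
      using \<sigma> True unfolding min_sol_def by blast
    obtain c c' where c: "\<sigma>' l = Some c'" "\<sigma> l = Some c" "leq_bt c' c"
      using \<sigma>' True \<open>sat \<sigma> C\<close> unfolding min_sol_def by blast
    from b c have "b = b'" using leq_bt_antisym by simp
    with b show ?thesis by simp
  next
    case False
    with assms have "l \<notin> dom \<sigma>" "l \<notin> dom \<sigma>'" unfolding min_sol_def by auto
    then show ?thesis by (simp add: domIff)
  qed
qed

theorem theorem2:
  fixes C C' :: "('l::finite) constr set" and \<sigma> :: "'l subst"
  assumes "finite C" and "finite C'"
    and "norm_exh C \<sigma> C'"
    and "normal_form C'"
  shows "\<exists>!\<sigma>c. min_sol \<sigma>c C"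
proof -
  have "satisfiable C"
    using assms(3,4) norm_steps_reflect_satisfiable normal_form_satisfiable
    unfolding norm_exh_def by blast
  then show ?thesis using min_sol_least_sol min_sol_unique by blast
qed

end
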